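(* Let $\mathcal{C}$ be a prevariety over a finite alphabet $A$ and let $\alpha:A^*\to M$ be an $\mathit{SF}(\mathcal{C})$-morphism. There exists a $\mathcal{C}$-morphism $\eta:A^*\to N$ such that for every $u\in A^*$, if $\eta(u)$ is idempotent, then $(\alpha(u))^{\omega+1}=(\alpha(u))^{\omega}$.
   Context: Fix a finite alphabet $A$. A prevariety is a class of regular languages over $A$ containing $\emptyset$ and $A^*$, closed under union, intersection, complement, and under the quotients $u^{-1}L=\{w\mid uw\in L\}$ and $Lu^{-1}=\{w\mid wu\in L\}$. $\mathit{SF}(\mathcal{C})$ is the least class containing $\mathcal{C}$ and all $\{a\}$ ($a\in A$), closed under union, complement and concatenation. For a class $\mathcal{D}$, a $\mathcal{D}$-morphism is a surjective monoid morphism $\eta:A^*\to N$ onto a finite monoid $N$ such that every language $\eta^{-1}(F)$, $F\subseteq N$, belongs to $\mathcal{D}$. For a finite monoid $M$, $\omega$ denotes a positive integer such that $s^\omega$ is idempotent for every $s\in M$. *)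

theory Defs
  imports "HOL-Algebra.Group"
begin

definition regular_lang :: "'a list set \<Rightarrow> bool" where
  "regular_lang L \<longleftrightarrow>
     (\<exists>(Q::nat set) (\<delta>::nat \<Rightarrow> 'a \<Rightarrow> nat) q0 F.
        finite Q \<and> q0 \<in> Q \<and> F \<subseteq> Q \<and> (\<forall>q\<in>Q. \<forall>a. \<delta> q a \<in> Q) \<and>
        L = {w. foldl \<delta> q0 w \<in> F})"

definition prevariety :: "'a list set set \<Rightarrow> bool" where
  "prevariety C \<longleftrightarrow>
     (\<forall>L\<in>C. regular_lang L) \<and> {} \<in> C \<and> UNIV \<in> C \<and>
     (\<forall>K\<in>C. \<forall>L\<in>C. K \<union> L \<in> C) \<and>
     (\<forall>K\<in>C. \<forall>L\<in>C. K \<inter> L \<in> C) \<and>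
     (\<forall>L\<in>C. - L \<in> C) \<and>
     (\<forall>L\<in>C. \<forall>u. {w. u @ w \<in> L} \<in> C) \<and>
     (\<forall>L\<in>C. \<forall>u. {w. w @ u \<in> L} \<in> C)"

definition lconc :: "'a list set \<Rightarrow> 'a list set \<Rightarrow> 'a list set" where
  "lconc K L = {u @ v | u v. u \<in> K \<and> v \<in> L}"

inductive_set SF :: "'a list set set \<Rightarrow> 'a list set set" for C where
  base: "L \<in> C \<Longrightarrow> L \<in> SF C"
| letter: "{[a]} \<in> SF C"
| union: "K \<in> SF C \<Longrightarrow> L \<in> SF C \<Longrightarrow> K \<union> L \<in> SF C"
| compl: "L \<in> SF C \<Longrightarrow> - L \<in> SF C"
| conc: "K \<in> SF C \<Longrightarrow> L \<in> SF C \<Longrightarrow> lconc K L \<in> SF C"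

definition word_morphism :: "('a list \<Rightarrow> 'm) \<Rightarrow> ('m, 'b) monoid_scheme \<Rightarrow> bool" where
  "word_morphism \<eta> N \<longleftrightarrow>
     monoid N \<and> finite (carrier N) \<and> range \<eta> = carrier N \<and>
     \<eta> [] = \<one>\<^bsub>N\<^esub> \<and> (\<forall>u v. \<eta> (u @ v) = \<eta> u \<otimes>\<^bsub>N\<^esub> \<eta> v)"

definition class_morphism :: "'a list set set \<Rightarrow> ('a list \<Rightarrow> 'm) \<Rightarrow> ('m, 'b) monoid_scheme \<Rightarrow> bool" where
  "class_morphism D \<eta> N \<longleftrightarrow>
     word_morphism \<eta> N \<and> (\<forall>F. F \<subseteq> carrier N \<longrightarrow> \<eta> -` F \<in> D)"

end

theory Submission
  imports Defs
begin

text \<open>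
  Every language L of SF(C) is controlled by a finite set B of languages of C: whenever
  u^(k+1) and u are indistinguishable in every context by every K \<in> B, membership of
  x u^k y in L becomes independent of k for large k. This goes by induction on SF(C); for a
  concatenation, a factorisation of x u^k y either leaves the block u^k on one side or splits it
  into two blocks, one of which is long. The finitely many two-sided quotients of the members
  of B define a congruence of finite index whose classes lie in C, hence a C-morphism \<eta> that
  recognises B. If \<eta>(u) is idempotent, B cannot distinguish u^(k+1) from u, so the language
  \<alpha>\<inverse>(\<alpha>(u)^\<omega>) is stable under pumping u; pumping u^k for a large multiple k of \<omega>
  yields \<alpha>(u)^(\<omega>+1) = \<alpha>(u)^\<omega>.
\<close>

definition word_pow :: "'a list \<Rightarrow> nat \<Rightarrow> 'a list" where
  "word_pow u k = concat (replicate k u)"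

lemma word_pow_0 [simp]: "word_pow u 0 = []"
  by (simp add: word_pow_def)

lemma word_pow_Suc: "word_pow u (Suc k) = u @ word_pow u k"
  by (simp add: word_pow_def)

lemma word_pow_Nil [simp]: "word_pow [] k = []"
  by (simp add: word_pow_def)

lemma word_pow_add: "word_pow u (i + j) = word_pow u i @ word_pow u j"
  by (induction i) (simp_all add: word_pow_Suc)

lemma word_pow_Suc_right: "word_pow u (Suc k) = word_pow u k @ u"
  using word_pow_add[of u k 1] by (simp add: word_pow_Suc)

lemma word_pow_add_Suc: "word_pow u (i + Suc j) = word_pow u i @ u @ word_pow u j"
  by (simp only: word_pow_add word_pow_Suc)

lemma length_word_pow [simp]: "length (word_pow u k) = k * length u"
  by (induction k) (simp_all add: word_pow_Suc)

lemma append_eq_word_pow_cases: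
  assumes "v @ w = x @ word_pow u k @ y"
  obtains (left) x' where "x = v @ x'" "w = x' @ word_pow u k @ y"
    | (middle) i j u1 u2 where "k = Suc (i + j)" "u = u1 @ u2"
        "v = x @ word_pow u i @ u1" "w = u2 @ word_pow u j @ y"
    | (right) y' where "y = y' @ w" "v = x @ word_pow u k @ y'"
proof -
  have "(\<exists>x'. x = v @ x' \<and> w = x' @ word_pow u k @ y) \<or>
    (\<exists>i j u1 u2. k = Suc (i + j) \<and> u = u1 @ u2 \<and>
       v = x @ word_pow u i @ u1 \<and> w = u2 @ word_pow u j @ y) \<or>
    (\<exists>y'. y = y' @ w \<and> v = x @ word_pow u k @ y')"
    using assms
  proof (induction k arbitrary: x)
    case 0
    then obtain us where "x = v @ us \<and> us @ y = w \<or> x @ us = v \<and> y = us @ w"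
      by (auto simp: append_eq_append_conv2)
    then show ?case by auto
  next
    case (Suc k)
    have "v @ w = (x @ u) @ word_pow u k @ y"
      using Suc.prems by (simp add: word_pow_Suc)
    from Suc.IH[OF this] show ?case
    proof (elim disjE exE conjE)
      fix x' assume x': "x @ u = v @ x'" and w: "w = x' @ word_pow u k @ y"
      from x' obtain us where "x = v @ us \<and> us @ u = x' \<or> x @ us = v \<and> u = us @ x'"
        by (auto simp: append_eq_append_conv2)
      then show ?thesis
      proof
        assume "x = v @ us \<and> us @ u = x'"
        then show ?thesis using w by (auto simp: word_pow_Suc)
      next
        assume "x @ us = v \<and> u = us @ x'"
        then have "Suc k = Suc (0 + k) \<and> u = us @ x' \<and>
            v = x @ word_pow u 0 @ us \<and> w = x' @ word_pow u k @ y"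
          using w by simp
        then show ?thesis by blast
      qed
    next
      fix i j u1 u2
      assume "k = Suc (i + j)" "u = u1 @ u2" "v = (x @ u) @ word_pow u i @ u1"
        "w = u2 @ word_pow u j @ y"
      then have "Suc k = Suc (Suc i + j) \<and> u = u1 @ u2 \<and>
          v = x @ word_pow u (Suc i) @ u1 \<and> w = u2 @ word_pow u j @ y"
        by (simp add: word_pow_Suc)
      then show ?thesis by blast
    qed (auto simp: word_pow_Suc)
  qed
  then show thesis
    using that by blast
qed

text \<open>In the syntactic monoid of L, the image s of u satisfies s^(n+1) = s^n.\<close>

definition pump_stable :: "'a list set \<Rightarrow> 'a list \<Rightarrow> nat \<Rightarrow> bool" where
  "pump_stable L u n \<longleftrightarrow>
     (\<forall>x y k. n \<le> k \<longrightarrow> (x @ word_pow u (Suc k) @ y \<in> L \<longleftrightarrow> x @ word_pow u k @ y \<in> L))"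

text \<open>In the syntactic monoid of K, the image of u is idempotent.\<close>

definition pump_invariant :: "'a list set \<Rightarrow> 'a list \<Rightarrow> bool" where
  "pump_invariant K u \<longleftrightarrow> (\<forall>x y k. x @ word_pow u (Suc k) @ y \<in> K \<longleftrightarrow> x @ u @ y \<in> K)"

lemma pump_stableD:
  "pump_stable L u n \<Longrightarrow> n \<le> k \<Longrightarrow>
    x @ word_pow u (Suc k) @ y \<in> L \<longleftrightarrow> x @ word_pow u k @ y \<in> L"
  unfolding pump_stable_def by blast

lemma pump_stable_mono: "pump_stable L u n \<Longrightarrow> n \<le> m \<Longrightarrow> pump_stable L u m"
  unfolding pump_stable_def by auto

lemma pump_stable_Compl: "pump_stable L u n \<Longrightarrow> pump_stable (- L) u n"
  unfolding pump_stable_def by auto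

lemma pump_stable_Un:
  assumes "pump_stable K u m" and "pump_stable L u n"
  shows "pump_stable (K \<union> L) u (max m n)"
  using pump_stable_mono[OF assms(1), of "max m n"] pump_stable_mono[OF assms(2), of "max m n"]
  unfolding pump_stable_def by auto

lemma pump_stable_if_pump_invariant:
  assumes "pump_invariant L u"
  shows "pump_stable L u 1"
  unfolding pump_stable_def
proof (intro allI impI)
  fix x y and k :: nat
  assume "1 \<le> k"
  then obtain k' where "k = Suc k'"
    using Suc_le_D by auto
  then show "x @ word_pow u (Suc k) @ y \<in> L \<longleftrightarrow> x @ word_pow u k @ y \<in> L"
    using assms by (simp add: pump_invariant_def)
qed

lemma pump_stable_finite:
  assumes "finite L"
  shows "\<exists>n. pump_stable L u n"
proof (cases "u = []")
  case True
  then show ?thesis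
    by (auto simp: pump_stable_def)
next
  case False
  define n where "n = Suc (Max (length ` L))"
  have "length w < n" if "w \<in> L" for w
    unfolding n_def using assms that by (simp add: Max_ge le_imp_less_Suc)
  then have "w \<notin> L" if "n \<le> length w" for w
    using that leD by blast
  moreover have "n \<le> length (x @ word_pow u k @ y)" if "n \<le> k" for x y k
  proof -
    have "k * 1 \<le> k * length u"
      using False by (intro mult_le_mono2) (simp add: Suc_le_eq)
    moreover have "k * length u \<le> length (x @ word_pow u k @ y)"
      by simp
    ultimately show ?thesis
      using that by linarith
  qed
  ultimately have "pump_stable L u n"
    unfolding pump_stable_def by (meson le_SucI)
  then show ?thesis ..
qed

lemma lconcI: "v \<in> K \<Longrightarrow> w \<in> L \<Longrightarrow> v @ w \<in> lconc K L"
  unfolding lconc_def by blast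

lemma lconc_pump_up:
  assumes K: "pump_stable K u m" and L: "pump_stable L u n" and k: "m + n < k"
    and "x @ word_pow u k @ y \<in> lconc K L"
  shows "x @ word_pow u (Suc k) @ y \<in> lconc K L"
proof -
  obtain v w where v: "v \<in> K" and w: "w \<in> L" and vw: "v @ w = x @ word_pow u k @ y"
    using assms(4) by (auto simp: lconc_def)
  from vw show ?thesis
  proof (cases rule: append_eq_word_pow_cases)
    case (left x')
    then have "x' @ word_pow u (Suc k) @ y \<in> L"
      using pump_stableD[OF L, of k] w k by simp
    then show ?thesis
      using left v lconcI[of v K _ L] by simp
  next
    case (middle i j u1 u2)
    \<comment> \<open>The block u^k is cut into i and j copies with i + j + 1 = k, so one side is long.\<close>
    show ?thesis
    proof (cases "m \<le> i")
      case True
      then have "x @ word_pow u (Suc i) @ u1 \<in> K"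
        using pump_stableD[OF K] v middle by simp
      moreover have "x @ word_pow u (Suc k) @ y = (x @ word_pow u (Suc i) @ u1) @ w"
        using middle word_pow_add_Suc[of u "Suc i" j] by simp
      ultimately show ?thesis
        using w lconcI by metis
    next
      case False
      then have "u2 @ word_pow u (Suc j) @ y \<in> L"
        using pump_stableD[OF L, of j] w middle k by simp
      moreover have "x @ word_pow u (Suc k) @ y = v @ (u2 @ word_pow u (Suc j) @ y)"
        using middle word_pow_add_Suc[of u i "Suc j"] by simp
      ultimately show ?thesis
        using v lconcI by metis
    qed
  next
    case (right y')
    then have "x @ word_pow u (Suc k) @ y' \<in> K"
      using pump_stableD[OF K, of k] v k by simp
    then have "(x @ word_pow u (Suc k) @ y') @ w \<in> lconc K L"
      using w by (rule lconcI)
    then show ?thesis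
      using right by simp
  qed
qed

lemma lconc_pump_down:
  assumes K: "pump_stable K u m" and L: "pump_stable L u n" and k: "m + n < k"
    and "x @ word_pow u (Suc k) @ y \<in> lconc K L"
  shows "x @ word_pow u k @ y \<in> lconc K L"
proof -
  obtain v w where v: "v \<in> K" and w: "w \<in> L" and vw: "v @ w = x @ word_pow u (Suc k) @ y"
    using assms(4) by (auto simp: lconc_def)
  from vw show ?thesis
  proof (cases rule: append_eq_word_pow_cases)
    case (left x')
    then have "x' @ word_pow u k @ y \<in> L"
      using pump_stableD[OF L, of k] w k by simp
    then show ?thesis
      using left v lconcI[of v K _ L] by simp
  next
    case (middle i j u1 u2)
    show ?thesis
    proof (cases "m < i")
      case True
      then obtain i' where i': "i = Suc i'" "m \<le> i'"
        by (cases i) auto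
      then have "x @ word_pow u i' @ u1 \<in> K"
        using pump_stableD[OF K] v middle by simp
      moreover have "x @ word_pow u k @ y = (x @ word_pow u i' @ u1) @ w"
        using middle i' word_pow_add_Suc[of u i' j] by simp
      ultimately show ?thesis
        using w lconcI by metis
    next
      case False
      then obtain j' where j': "j = Suc j'" "n \<le> j'"
        using middle k by (cases j) auto
      then have "u2 @ word_pow u j' @ y \<in> L"
        using pump_stableD[OF L] w middle by simp
      moreover have "x @ word_pow u k @ y = v @ (u2 @ word_pow u j' @ y)"
        using middle j' word_pow_add_Suc[of u i j'] by simp
      ultimately show ?thesis
        using v lconcI by metis
    qed
  next
    case (right y')
    then have "x @ word_pow u k @ y' \<in> K"
      using pump_stableD[OF K, of k] v k by simp
    then have "(x @ word_pow u k @ y') @ w \<in> lconc K L"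
      using w by (rule lconcI)
    then show ?thesis
      using right by simp
  qed
qed

lemma pump_stable_lconc:
  assumes "pump_stable K u m" and "pump_stable L u n"
  shows "pump_stable (lconc K L) u (Suc (m + n))"
  unfolding pump_stable_def
  using lconc_pump_up[OF assms] lconc_pump_down[OF assms] by (meson Suc_le_eq)

lemma SF_pump_stable:
  assumes "L \<in> SF C"
  shows "\<exists>B. finite B \<and> B \<subseteq> C \<and>
    (\<forall>u. (\<forall>K\<in>B. pump_invariant K u) \<longrightarrow> (\<exists>n. pump_stable L u n))"
  using assms
proof (induction rule: SF.induct)
  case (base L)
  show ?case
    using base pump_stable_if_pump_invariant by (intro exI[of _ "{L}"]) auto
next
  case (letter a)
  show ?case
    using pump_stable_finite[of "{[a]}"] by (intro exI[of _ "{}"]) auto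
next
  case (union K L)
  then obtain B1 B2 where "finite B1" "B1 \<subseteq> C" "finite B2" "B2 \<subseteq> C"
    and "\<And>u. \<forall>K\<in>B1. pump_invariant K u \<Longrightarrow> \<exists>n. pump_stable K u n"
    and "\<And>u. \<forall>K\<in>B2. pump_invariant K u \<Longrightarrow> \<exists>n. pump_stable L u n"
    by metis
  then show ?case
    using pump_stable_Un by (intro exI[of _ "B1 \<union> B2"]) (simp, blast)
next
  case (compl L)
  then show ?case
    using pump_stable_Compl by meson
next
  case (conc K L)
  then obtain B1 B2 where "finite B1" "B1 \<subseteq> C" "finite B2" "B2 \<subseteq> C"
    and "\<And>u. \<forall>K\<in>B1. pump_invariant K u \<Longrightarrow> \<exists>n. pump_stable K u n"
    and "\<And>u. \<forall>K\<in>B2. pump_invariant K u \<Longrightarrow> \<exists>n. pump_stable L u n"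
    by metis
  then show ?case
    using pump_stable_lconc by (intro exI[of _ "B1 \<union> B2"]) (simp, blast)
qed

lemma SF_pump_stable_family:
  assumes "finite \<L>" and "\<L> \<subseteq> SF C"
  shows "\<exists>B. finite B \<and> B \<subseteq> C \<and>
    (\<forall>u. (\<forall>K\<in>B. pump_invariant K u) \<longrightarrow> (\<forall>L\<in>\<L>. \<exists>n. pump_stable L u n))"
  using assms
proof (induction \<L> rule: finite_induct)
  case empty
  show ?case
    by (intro exI[of _ "{}"]) simp
next
  case (insert L \<L>)
  from SF_pump_stable[of L C] insert.prems obtain B1 where "finite B1" "B1 \<subseteq> C"
    and "\<forall>u. (\<forall>K\<in>B1. pump_invariant K u) \<longrightarrow> (\<exists>n. pump_stable L u n)"
    by auto
  moreover from insert.IH insert.prems obtain B2 where "finite B2" "B2 \<subseteq> C"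
    and "\<forall>u. (\<forall>K\<in>B2. pump_invariant K u) \<longrightarrow> (\<forall>L\<in>\<L>. \<exists>n. pump_stable L u n)"
    by auto
  ultimately show ?case
    by (intro exI[of _ "B1 \<union> B2"]) auto
qed

definition quotients :: "'a list set \<Rightarrow> 'a list set set" where
  "quotients K = {{w. x @ w @ y \<in> K} | x y. True}"

lemma quotientsI: "{w. x @ w @ y \<in> K} \<in> quotients K"
  unfolding quotients_def by blast

lemma self_in_quotients: "K \<in> quotients K"
  using quotientsI[of "[]" "[]" K] by simp

lemma quotient_in_quotients:
  assumes "L \<in> quotients K"
  shows "{w. p @ w @ q \<in> L} \<in> quotients K"
proof -
  obtain x y where "L = {w. x @ w @ y \<in> K}"
    using assms unfolding quotients_def by blast
  then have "{w. p @ w @ q \<in> L} = {w. (x @ p) @ w @ (q @ y) \<in> K}"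
    by simp
  then show ?thesis
    using quotientsI by metis
qed

lemma finite_quotients:
  assumes "regular_lang K"
  shows "finite (quotients K)"
proof -
  obtain Q :: "nat set" and \<delta> q0 F where Q: "finite Q" "q0 \<in> Q" "F \<subseteq> Q"
    and \<delta>: "\<forall>q\<in>Q. \<forall>a. \<delta> q a \<in> Q" and K: "K = {w. foldl \<delta> q0 w \<in> F}"
    using assms unfolding regular_lang_def by blast
  have run: "foldl \<delta> p w \<in> Q" if "p \<in> Q" for p w
    using that \<delta> by (induction w arbitrary: p) auto
  have "quotients K \<subseteq> (\<lambda>(p, G). {w. foldl \<delta> p w \<in> G}) ` (Q \<times> Pow Q)"
  proof
    fix L
    assume "L \<in> quotients K"
    then obtain x y where L: "L = {w. x @ w @ y \<in> K}"
      unfolding quotients_def by blast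
    define p where "p = foldl \<delta> q0 x"
    define G where "G = {q \<in> Q. foldl \<delta> q y \<in> F}"
    have "p \<in> Q"
      unfolding p_def using run Q(2) .
    have "x @ w @ y \<in> K \<longleftrightarrow> foldl \<delta> p w \<in> G" for w
      using run[OF \<open>p \<in> Q\<close>, of w] unfolding K G_def p_def by simp
    then have "L = {w. foldl \<delta> p w \<in> G}"
      unfolding L by blast
    moreover have "(p, G) \<in> Q \<times> Pow Q"
      using \<open>p \<in> Q\<close> unfolding G_def by blast
    ultimately show "L \<in> (\<lambda>(p, G). {w. foldl \<delta> p w \<in> G}) ` (Q \<times> Pow Q)"
      by force
  qed
  then show ?thesis
    by (rule finite_subset) (simp add: Q(1))
qed

lemma quotients_subset:
  assumes "prevariety C" and "K \<in> C"
  shows "quotients K \<subseteq> C"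
proof
  fix L
  assume "L \<in> quotients K"
  then obtain x y where L: "L = {w. x @ w @ y \<in> K}"
    unfolding quotients_def by blast
  have "{w. x @ w \<in> K} \<in> C"
    using assms unfolding prevariety_def by blast
  then have "{w. w @ y \<in> {w. x @ w \<in> K}} \<in> C"
    using assms(1) unfolding prevariety_def by blast
  then show "L \<in> C"
    unfolding L by simp
qed

lemma prevariety_Inter:
  assumes "prevariety C" and "finite I" and "\<And>i. i \<in> I \<Longrightarrow> f i \<in> C"
  shows "(\<Inter>i\<in>I. f i) \<in> C"
  using assms(2,3)
proof (induction I rule: finite_induct)
  case empty
  then show ?case
    using assms(1) by (simp add: prevariety_def)
next
  case (insert i I)
  then have "f i \<inter> (\<Inter>i\<in>I. f i) \<in> C"
    using assms(1) unfolding prevariety_def by blast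
  then show ?case
    by simp
qed

lemma prevariety_Union:
  assumes "prevariety C" and "finite I" and "\<And>i. i \<in> I \<Longrightarrow> f i \<in> C"
  shows "(\<Union>i\<in>I. f i) \<in> C"
  using assms(2,3)
proof (induction I rule: finite_induct)
  case empty
  then show ?case
    using assms(1) by (simp add: prevariety_def)
next
  case (insert i I)
  then have "f i \<union> (\<Union>i\<in>I. f i) \<in> C"
    using assms(1) unfolding prevariety_def by blast
  then show ?case
    by simp
qed

lemma ex_word_morphism_of_congruence:
  fixes \<eta> :: "'a list \<Rightarrow> 'm"
  assumes "finite (range \<eta>)"
    and cong: "\<And>a a' b b'. \<eta> a = \<eta> a' \<Longrightarrow> \<eta> b = \<eta> b' \<Longrightarrow> \<eta> (a @ b) = \<eta> (a' @ b')"
  shows "\<exists>N :: 'm monoid. word_morphism \<eta> N"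
proof -
  define N :: "'m monoid" where
    "N = \<lparr>carrier = range \<eta>, mult = (\<lambda>s t. \<eta> (inv_into UNIV \<eta> s @ inv_into UNIV \<eta> t)), one = \<eta> []\<rparr>"
  have rep: "\<eta> (inv_into UNIV \<eta> (\<eta> a)) = \<eta> a" for a
    by (rule f_inv_into_f) simp
  have mult: "\<eta> a \<otimes>\<^bsub>N\<^esub> \<eta> b = \<eta> (a @ b)" for a b
    unfolding N_def using cong[OF rep rep] by simp
  have carrier: "carrier N = range \<eta>" and one: "\<one>\<^bsub>N\<^esub> = \<eta> []"
    unfolding N_def by simp_all
  have "monoid N"
  proof (rule monoidI)
    fix s t r
    assume "s \<in> carrier N" "t \<in> carrier N" "r \<in> carrier N"
    then obtain a b c where "s = \<eta> a" "t = \<eta> b" "r = \<eta> c"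
      unfolding carrier by blast
    then show "s \<otimes>\<^bsub>N\<^esub> t \<otimes>\<^bsub>N\<^esub> r = s \<otimes>\<^bsub>N\<^esub> (t \<otimes>\<^bsub>N\<^esub> r)"
      by (simp add: mult)
  qed (auto simp: carrier one mult)
  then have "word_morphism \<eta> N"
    unfolding word_morphism_def using assms(1) mult by (simp add: N_def)
  then show ?thesis ..
qed

lemma ex_class_morphism_of_congruence:
  fixes \<sigma> :: "'a list \<Rightarrow> 'b"
  assumes C: "prevariety C" and fin: "finite (range \<sigma>)"
    and cong: "\<And>a a' b b'. \<sigma> a = \<sigma> a' \<Longrightarrow> \<sigma> b = \<sigma> b' \<Longrightarrow> \<sigma> (a @ b) = \<sigma> (a' @ b')"
    and classes: "\<And>v. \<sigma> -` {\<sigma> v} \<in> C"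
  shows "\<exists>(\<eta> :: 'a list \<Rightarrow> nat) (N :: nat monoid).
           class_morphism C \<eta> N \<and> (\<forall>a b. \<eta> a = \<eta> b \<longrightarrow> \<sigma> a = \<sigma> b)"
proof -
  obtain g :: "'b \<Rightarrow> nat" where g: "inj_on g (range \<sigma>)"
    using finite_imp_inj_to_nat_seg[OF fin] by blast
  define \<eta> where "\<eta> = g \<circ> \<sigma>"
  have \<eta>_eq: "\<eta> a = \<eta> b \<longleftrightarrow> \<sigma> a = \<sigma> b" for a b
    unfolding \<eta>_def using inj_on_eq_iff[OF g] by simp
  have "finite (range \<eta>)"
    unfolding \<eta>_def image_comp[symmetric] using fin by blast
  moreover have "\<eta> (a @ b) = \<eta> (a' @ b')" if "\<eta> a = \<eta> a'" "\<eta> b = \<eta> b'" for a a' b b'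
    using that cong unfolding \<eta>_eq by blast
  ultimately obtain N :: "nat monoid" where N: "word_morphism \<eta> N"
    using ex_word_morphism_of_congruence by blast
  have "\<eta> -` F \<in> C" for F
  proof -
    have "\<eta> -` F = (\<Union>s\<in>\<sigma> ` (\<eta> -` F). \<sigma> -` {s})"
      using \<eta>_eq by auto
    also have "\<dots> \<in> C"
    proof (rule prevariety_Union[OF C])
      show "finite (\<sigma> ` (\<eta> -` F))"
        using fin by (rule finite_subset[rotated]) blast
    qed (use classes in blast)
    finally show ?thesis .
  qed
  then show ?thesis
    using N \<eta>_eq unfolding class_morphism_def by blast
qed

lemma prevariety_agreement_class:
  assumes C: "prevariety C" and "finite Q" and "Q \<subseteq> C"
  shows "{w. \<forall>L\<in>Q. w \<in> L \<longleftrightarrow> v \<in> L} \<in> C"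
proof -
  have "{w. \<forall>L\<in>Q. w \<in> L \<longleftrightarrow> v \<in> L} = (\<Inter>L\<in>Q. if v \<in> L then L else - L)"
    by auto
  also have "\<dots> \<in> C"
  proof (rule prevariety_Inter[OF C \<open>finite Q\<close>])
    fix L
    assume "L \<in> Q"
    then have "L \<in> C"
      using \<open>Q \<subseteq> C\<close> by blast
    then show "(if v \<in> L then L else - L) \<in> C"
      using C unfolding prevariety_def by simp
  qed
  finally show ?thesis .
qed

lemma ex_class_morphism_recognising:
  fixes Q :: "'a list set set"
  assumes C: "prevariety C" and "finite Q" and "Q \<subseteq> C"
    and closed: "\<And>L p q. L \<in> Q \<Longrightarrow> {w. p @ w @ q \<in> L} \<in> Q"
  shows "\<exists>(\<eta> :: 'a list \<Rightarrow> nat) (N :: nat monoid).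
           class_morphism C \<eta> N \<and> (\<forall>a b. \<eta> a = \<eta> b \<longrightarrow> (\<forall>L\<in>Q. a \<in> L \<longleftrightarrow> b \<in> L))"
proof -
  define \<sigma> where "\<sigma> v = {L \<in> Q. v \<in> L}" for v
  have \<sigma>_eq: "\<sigma> a = \<sigma> b \<longleftrightarrow> (\<forall>L\<in>Q. a \<in> L \<longleftrightarrow> b \<in> L)" for a b
    unfolding \<sigma>_def by blast
  have "range \<sigma> \<subseteq> Pow Q"
    unfolding \<sigma>_def by blast
  then have "finite (range \<sigma>)"
    by (rule finite_subset) (simp add: \<open>finite Q\<close>)
  moreover have "\<sigma> (a @ b) = \<sigma> (a' @ b')" if "\<sigma> a = \<sigma> a'" "\<sigma> b = \<sigma> b'" for a a' b b'
    unfolding \<sigma>_eq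
  proof
    fix L
    assume "L \<in> Q"
    then have "{w. [] @ w @ b \<in> L} \<in> Q" and "{w. a' @ w @ [] \<in> L} \<in> Q"
      by (simp_all only: closed)
    then have "a @ b \<in> L \<longleftrightarrow> a' @ b \<in> L" and "a' @ b \<in> L \<longleftrightarrow> a' @ b' \<in> L"
      using that unfolding \<sigma>_eq by fastforce+
    then show "a @ b \<in> L \<longleftrightarrow> a' @ b' \<in> L"
      by blast
  qed
  moreover have "\<sigma> -` {\<sigma> v} \<in> C" for v
    using prevariety_agreement_class[OF assms(1-3), of v] by (simp add: vimage_def \<sigma>_eq)
  ultimately obtain \<eta> and N :: "nat monoid"
    where "class_morphism C \<eta> N" and "\<forall>a b. \<eta> a = \<eta> b \<longrightarrow> \<sigma> a = \<sigma> b"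
    using ex_class_morphism_of_congruence[OF C] by metis
  then show ?thesis
    unfolding \<sigma>_eq by blast
qed

lemma ex_class_morphism_separating:
  fixes B :: "'a list set set"
  assumes C: "prevariety C" and "finite B" and "B \<subseteq> C"
  shows "\<exists>(\<eta> :: 'a list \<Rightarrow> nat) (N :: nat monoid).
           class_morphism C \<eta> N \<and> (\<forall>a b. \<eta> a = \<eta> b \<longrightarrow> (\<forall>K\<in>B. a \<in> K \<longleftrightarrow> b \<in> K))"
proof -
  define Q where "Q = (\<Union>K\<in>B. quotients K)"
  have "regular_lang K" if "K \<in> B" for K
    using that assms unfolding prevariety_def by blast
  then have "finite Q"
    unfolding Q_def using \<open>finite B\<close> finite_quotients by blast
  moreover have "Q \<subseteq> C"
    unfolding Q_def using assms quotients_subset by blast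
  moreover have "{w. p @ w @ q \<in> L} \<in> Q" if "L \<in> Q" for L p q
    using that quotient_in_quotients unfolding Q_def by blast
  ultimately obtain \<eta> and N :: "nat monoid" where "class_morphism C \<eta> N"
    and "\<forall>a b. \<eta> a = \<eta> b \<longrightarrow> (\<forall>L\<in>Q. a \<in> L \<longleftrightarrow> b \<in> L)"
    using ex_class_morphism_recognising[OF C] by meson
  moreover have "B \<subseteq> Q"
    unfolding Q_def using self_in_quotients by blast
  ultimately show ?thesis
    by blast
qed

lemma word_morphism_word_pow:
  assumes "word_morphism \<alpha> M"
  shows "\<alpha> (word_pow u k) = \<alpha> u [^]\<^bsub>M\<^esub> k"
  using assms by (induction k) (simp_all add: word_morphism_def word_pow_Suc_right)

lemma (in monoid) idempotent_nat_pow: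
  assumes "e \<in> carrier G" and "e \<otimes> e = e"
  shows "e [^] Suc m = e"
  using assms by (induction m) simp_all

lemma pump_invariant_if_idempotent:
  assumes \<eta>: "word_morphism \<eta> N" and idem: "\<eta> u \<otimes>\<^bsub>N\<^esub> \<eta> u = \<eta> u"
    and K: "\<And>a b. \<eta> a = \<eta> b \<Longrightarrow> a \<in> K \<longleftrightarrow> b \<in> K"
  shows "pump_invariant K u"
proof -
  have hom: "\<eta> (a @ b) = \<eta> a \<otimes>\<^bsub>N\<^esub> \<eta> b" for a b
    using \<eta> unfolding word_morphism_def by blast
  have "\<eta> (word_pow u (Suc k)) = \<eta> u" for k
    by (induction k) (simp_all add: word_pow_Suc hom idem)
  then have "\<eta> (x @ word_pow u (Suc k) @ y) = \<eta> (x @ u @ y)" for x y k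
    by (simp add: hom)
  then show ?thesis
    unfolding pump_invariant_def using K by blast
qed

lemma ex_class_morphism_pump_invariant:
  assumes "prevariety C" and "finite B" and "B \<subseteq> C"
  shows "\<exists>(\<eta> :: 'a list \<Rightarrow> nat) (N :: nat monoid). class_morphism C \<eta> N \<and>
           (\<forall>u. \<eta> u \<otimes>\<^bsub>N\<^esub> \<eta> u = \<eta> u \<longrightarrow> (\<forall>K\<in>B. pump_invariant K u))"
proof -
  obtain \<eta> and N :: "nat monoid" where \<eta>: "class_morphism C \<eta> N"
    and sep: "\<forall>a b. \<eta> a = \<eta> b \<longrightarrow> (\<forall>K\<in>B. a \<in> K \<longleftrightarrow> b \<in> K)"
    using ex_class_morphism_separating[OF assms] by meson
  have "pump_invariant K u" if idem: "\<eta> u \<otimes>\<^bsub>N\<^esub> \<eta> u = \<eta> u" and "K \<in> B" for u K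
  proof (rule pump_invariant_if_idempotent)
    show "word_morphism \<eta> N"
      using \<eta> unfolding class_morphism_def by simp
    show "\<eta> u \<otimes>\<^bsub>N\<^esub> \<eta> u = \<eta> u"
      by (rule idem)
    show "\<eta> a = \<eta> b \<Longrightarrow> a \<in> K \<longleftrightarrow> b \<in> K" for a b
      using sep \<open>K \<in> B\<close> by blast
  qed
  then show ?thesis
    using \<eta> by blast
qed

lemma nat_pow_Suc_eq_if_pump_stable:
  fixes \<omega> :: nat
  assumes \<alpha>: "word_morphism \<alpha> M" and "0 < \<omega>"
    and idem: "\<alpha> u [^]\<^bsub>M\<^esub> \<omega> \<otimes>\<^bsub>M\<^esub> \<alpha> u [^]\<^bsub>M\<^esub> \<omega> = \<alpha> u [^]\<^bsub>M\<^esub> \<omega>"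
    and stable: "pump_stable (\<alpha> -` {\<alpha> u [^]\<^bsub>M\<^esub> \<omega>}) u n"
  shows "\<alpha> u [^]\<^bsub>M\<^esub> (\<omega> + 1) = \<alpha> u [^]\<^bsub>M\<^esub> \<omega>"
proof -
  interpret M: monoid M
    using \<alpha> by (simp add: word_morphism_def)
  have u: "\<alpha> u \<in> carrier M"
    using \<alpha> by (auto simp: word_morphism_def)
  define k where "k = \<omega> * Suc n"
  have "1 * Suc n \<le> k"
    unfolding k_def using \<open>0 < \<omega>\<close> by (intro mult_le_mono1) simp
  then have "n \<le> k"
    by simp
  have "\<alpha> u [^]\<^bsub>M\<^esub> k = (\<alpha> u [^]\<^bsub>M\<^esub> \<omega>) [^]\<^bsub>M\<^esub> Suc n"
    unfolding k_def by (simp only: M.nat_pow_pow[OF u])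
  also have "\<dots> = \<alpha> u [^]\<^bsub>M\<^esub> \<omega>"
    using M.idempotent_nat_pow[OF M.nat_pow_closed[OF u] idem] .
  finally have k: "\<alpha> (word_pow u k) = \<alpha> u [^]\<^bsub>M\<^esub> \<omega>"
    using \<alpha> by (simp add: word_morphism_word_pow)
  then have "\<alpha> ([] @ word_pow u (Suc k) @ []) = \<alpha> u [^]\<^bsub>M\<^esub> \<omega>"
    using pump_stableD[OF stable \<open>n \<le> k\<close>, of "[]" "[]"] by simp
  then have "\<alpha> u [^]\<^bsub>M\<^esub> \<omega> = \<alpha> u [^]\<^bsub>M\<^esub> k \<otimes>\<^bsub>M\<^esub> \<alpha> u"
    using \<alpha> by (simp add: word_morphism_word_pow)
  also have "\<dots> = \<alpha> u [^]\<^bsub>M\<^esub> (\<omega> + 1)"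
    using k \<alpha> by (simp add: word_morphism_word_pow)
  finally show ?thesis
    by simp
qed

theorem proposition3p3:
  fixes C :: "('a::finite) list set set"
    and \<alpha> :: "'a list \<Rightarrow> 'm"
    and M :: "'m monoid"
    and \<omega> :: nat
  assumes "prevariety C"
    and "class_morphism (SF C) \<alpha> M"
    and "\<omega> > 0"
    and "\<forall>s\<in>carrier M. s [^]\<^bsub>M\<^esub> \<omega> \<otimes>\<^bsub>M\<^esub> s [^]\<^bsub>M\<^esub> \<omega> = s [^]\<^bsub>M\<^esub> \<omega>"
  shows "\<exists>(\<eta> :: 'a list \<Rightarrow> nat) (N :: nat monoid). class_morphism C \<eta> N \<and>
           (\<forall>u. \<eta> u \<otimes>\<^bsub>N\<^esub> \<eta> u = \<eta> u \<longrightarrow>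
                 \<alpha> u [^]\<^bsub>M\<^esub> (\<omega> + 1) = \<alpha> u [^]\<^bsub>M\<^esub> \<omega>)"
proof -
  have \<alpha>: "word_morphism \<alpha> M" and "monoid M" and fin: "finite (carrier M)"
    and SF: "(\<lambda>s. \<alpha> -` {s}) ` carrier M \<subseteq> SF C"
    using assms(2) by (auto simp: class_morphism_def word_morphism_def)
  obtain B where "finite B" "B \<subseteq> C" and stable: "\<And>u. \<forall>K\<in>B. pump_invariant K u \<Longrightarrow>
      \<forall>s\<in>carrier M. \<exists>n. pump_stable (\<alpha> -` {s}) u n"
    using SF_pump_stable_family[OF finite_imageI[OF fin] SF] by auto
  obtain \<eta> and N :: "nat monoid" where \<eta>: "class_morphism C \<eta> N"
    and invariant: "\<And>u. \<eta> u \<otimes>\<^bsub>N\<^esub> \<eta> u = \<eta> u \<Longrightarrow> \<forall>K\<in>B. pump_invariant K u"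
    using ex_class_morphism_pump_invariant[OF assms(1) \<open>finite B\<close> \<open>B \<subseteq> C\<close>] by meson
  have "\<alpha> u [^]\<^bsub>M\<^esub> (\<omega> + 1) = \<alpha> u [^]\<^bsub>M\<^esub> \<omega>" if idem: "\<eta> u \<otimes>\<^bsub>N\<^esub> \<eta> u = \<eta> u" for u
  proof -
    have u: "\<alpha> u \<in> carrier M"
      using \<alpha> unfolding word_morphism_def by blast
    then have "\<alpha> u [^]\<^bsub>M\<^esub> \<omega> \<in> carrier M"
      using monoid.nat_pow_closed[OF \<open>monoid M\<close>] by blast
    then obtain n where "pump_stable (\<alpha> -` {\<alpha> u [^]\<^bsub>M\<^esub> \<omega>}) u n"
      using stable[OF invariant[OF idem]] by blast
    then show ?thesis
      using nat_pow_Suc_eq_if_pump_stable[OF \<alpha> assms(3)] assms(4) u by blast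
  qed
  then show ?thesis
    using \<eta> by blast
qed

end
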